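(* There exist $b_1,b_2\in L^\infty_{loc}(\mathbb{R})$ such that $C_bH=[b_2,[b_1,H]]$ is bounded on $L^2(\mathbb{R})$, but $S_{A,B}(b_1,b_2)=\infty$ and $T_C(b_1,b_2)=\infty$ for all log-bumps $A,B,C$ with $\bar A,\bar B,\bar C\in B_2$.
   Context: $H$ is the Hilbert transform $Hf(x)=\lim_{\varepsilon\to0}\int_{|x-y|>\varepsilon}\frac{f(y)}{x-y}dy$; $[A,B]=AB-BA$ with $b_i$ acting by multiplication; the commutator is defined on $L^\infty_c$ and bounded on $L^2$ means $\|C_bHf\|_2\le K\|f\|_2$ for $f\in L^\infty_c$. A log-bump is a function $\Phi(t)=t^p\log(e+t)^{p-1+\delta}$ on $[0,\infty)$ with $p\in(1,\infty)$, $\delta\in(0,\infty)$ (a Young function). For a Young function $A$: $\bar A(t)=\sup_{s>0}\{st-A(s)\}$; $A\in B_2$ means $\int_1^\infty\frac{A(t)}{t^2}\frac{dt}{t}<\infty$; $\langle|f|\rangle_{A,I}=\inf\{\lambda>0:\frac1{|I|}\int_IA(|f|/\lambda)\le1\}$. With $\langle g\rangle_I=\frac1{|I|}\int_Ig$ and suprema over intervals $I$: $S_{A,B}(b_1,b_2)=\sup_I\langle|b_1-\langle b_1\rangle_I|\rangle_{A,I}\langle|b_2-\langle b_2\rangle_I|\rangle_{B,I}$, $T_C(b_1,b_2)=\sup_I\langle|b_1-\langle b_1\rangle_I||b_2-\langle b_2\rangle_I|\rangle_{C,I}$. *)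

theory Defs
  imports "HOL-Analysis.Analysis"
begin

definition hilbert :: "(real \<Rightarrow> real) \<Rightarrow> real \<Rightarrow> real" where
  "hilbert f x = Lim (at_right 0)
     (\<lambda>\<epsilon>. LINT y:{y. \<epsilon> < \<bar>x - y\<bar>}|lborel. f y / (x - y))"

definition commutator ::
  "(real \<Rightarrow> real) \<Rightarrow> ((real \<Rightarrow> real) \<Rightarrow> real \<Rightarrow> real) \<Rightarrow> (real \<Rightarrow> real) \<Rightarrow> real \<Rightarrow> real" where
  "commutator b T f = (\<lambda>x. b x * T f x - T (\<lambda>y. b y * f y) x)"

definition Linf_c :: "(real \<Rightarrow> real) \<Rightarrow> bool" where
  "Linf_c f \<longleftrightarrow> f \<in> borel_measurable lborel \<and>
     (\<exists>M. AE x in lborel. \<bar>f x\<bar> \<le> M) \<and>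
     (\<exists>K. compact K \<and> (AE x in lborel. x \<notin> K \<longrightarrow> f x = 0))"

definition Linf_loc :: "(real \<Rightarrow> real) \<Rightarrow> bool" where
  "Linf_loc b \<longleftrightarrow> b \<in> borel_measurable lborel \<and>
     (\<forall>K. compact K \<longrightarrow> (\<exists>M. AE x in lborel. x \<in> K \<longrightarrow> \<bar>b x\<bar> \<le> M))"

definition L2_bounded_on_Linf_c :: "((real \<Rightarrow> real) \<Rightarrow> real \<Rightarrow> real) \<Rightarrow> bool" where
  "L2_bounded_on_Linf_c T \<longleftrightarrow> (\<exists>K\<ge>0. \<forall>f. Linf_c f \<longrightarrow>
     (\<integral>\<^sup>+ x. ennreal ((T f x)\<^sup>2) \<partial>lborel) \<le> ennreal (K\<^sup>2) * (\<integral>\<^sup>+ x. ennreal ((f x)\<^sup>2) \<partial>lborel))"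

definition log_bump :: "(real \<Rightarrow> real) \<Rightarrow> bool" where
  "log_bump \<Phi> \<longleftrightarrow> (\<exists>p \<delta>. 1 < p \<and> 0 < \<delta> \<and>
     (\<forall>t\<ge>0. \<Phi> t = t powr p * ln (exp 1 + t) powr (p - 1 + \<delta>)))"

text \<open>Complementary Young function  bar A (t) = sup_{s>0} (s t - A s).
  (For log-bumps this set is bounded above, so the real supremum is the true one.)\<close>
definition young_conj :: "(real \<Rightarrow> real) \<Rightarrow> real \<Rightarrow> real" where
  "young_conj A t = (SUP s\<in>{0<..}. s * t - A s)"

definition B2 :: "(real \<Rightarrow> real) \<Rightarrow> bool" where
  "B2 A \<longleftrightarrow> (\<integral>\<^sup>+ t\<in>{1..}. ennreal (A t / t\<^sup>2 / t) \<partial>lborel) < \<infinity>"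

definition avg :: "(real \<Rightarrow> real) \<Rightarrow> real \<Rightarrow> real \<Rightarrow> real" where
  "avg g a b = (LINT x:{a..b}|lborel. g x) / (b - a)"

definition orlicz_avg :: "(real \<Rightarrow> real) \<Rightarrow> (real \<Rightarrow> real) \<Rightarrow> real \<Rightarrow> real \<Rightarrow> ereal" where
  "orlicz_avg A g a b = Inf {ereal l | l. 0 < l \<and>
     (\<integral>\<^sup>+ x\<in>{a..b}. ennreal (A (\<bar>g x\<bar> / l)) \<partial>lborel) \<le> ennreal (b - a)}"

definition S_AB :: "(real \<Rightarrow> real) \<Rightarrow> (real \<Rightarrow> real) \<Rightarrow> (real \<Rightarrow> real) \<Rightarrow> (real \<Rightarrow> real) \<Rightarrow> ereal" where
  "S_AB A B b1 b2 = (SUP I\<in>{(a, b). a < b}. case I of (a, b) \<Rightarrow>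
     orlicz_avg A (\<lambda>x. b1 x - avg b1 a b) a b * orlicz_avg B (\<lambda>x. b2 x - avg b2 a b) a b)"

definition T_C :: "(real \<Rightarrow> real) \<Rightarrow> (real \<Rightarrow> real) \<Rightarrow> (real \<Rightarrow> real) \<Rightarrow> ereal" where
  "T_C C b1 b2 = (SUP I\<in>{(a, b). a < b}. case I of (a, b) \<Rightarrow>
     orlicz_avg C (\<lambda>x. \<bar>b1 x - avg b1 a b\<bar> * \<bar>b2 x - avg b2 a b\<bar>) a b)"

end

theory Submission
  imports Defs "HOL-Real_Asymp.Real_Asymp"
begin

text \<open>Take \<open>b\<^sub>2\<close> the indicator of \<open>(-\<infinity>, 0]\<close> and \<open>b\<^sub>1\<close> a sequence of spikes of height
  \<open>h\<^sub>n\<close> on unit intervals \<open>[a\<^sub>n, a\<^sub>n + 1)\<close> with \<open>h\<^sub>n\<^sup>2 / a\<^sub>n = 2\<^sup>-\<^sup>n\<close>.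
  Since \<open>b\<^sub>1 b\<^sub>2 = 0\<close> and the supports are at distance at least 1, the double commutator
  is \<open>-b\<^sub>2 H(b\<^sub>1 f) - b\<^sub>1 H(b\<^sub>2 f)\<close>, an integral operator with non-singular kernel, and
  Cauchy-Schwarz gives \<open>|C f(x)|\<^sup>2 \<le> W(x) \<parallel>f\<parallel>\<^sub>2\<^sup>2\<close> pointwise with \<open>\<integral> W = 4\<close>.

  If the complementary function of a log-bump \<open>A(t) = t\<^sup>p log(e + t)\<^sup>p\<^sup>-\<^sup>1\<^sup>+\<^sup>\<delta>\<close> satisfies
  \<open>B\<^sub>2\<close>, then \<open>p \<ge> 2\<close> (for \<open>p < 2\<close> it is at least \<open>t\<^sup>2/2\<close> for large \<open>t\<close>), so
  \<open>A(t) \<ge> t\<^sup>2 log(e + t)\<close> for \<open>t \<ge> 1\<close>. On \<open>I = [-a\<^sub>n, a\<^sub>n + 1]\<close> the function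
  \<open>b\<^sub>2\<close> deviates from its mean by at least \<open>1/3\<close> everywhere, and \<open>b\<^sub>1\<close> by at least
  \<open>h\<^sub>n/2\<close> either on the \<open>n\<close>-th spike or on a unit interval left of 0. With
  \<open>h\<^sub>n \<approx> exp(n\<^sup>2 2\<^sup>n)\<close>, the logarithm in the bump beats the length
  \<open>|I| \<approx> h\<^sub>n\<^sup>2 2\<^sup>n\<close>, so the Orlicz averages over \<open>I\<close> are of order at least \<open>n\<close>.\<close>

lemma nn_integral_atLeast_inverse_infinite:
  fixes c t0 :: real
  assumes c: "0 < c" and t0: "0 < t0"
  shows "(\<integral>\<^sup>+ t. ennreal (c / t) * indicator {t0..} t \<partial>lborel) = \<infinity>"
proof (rule ccontr)
  let ?I = "\<integral>\<^sup>+ t. ennreal (c / t) * indicator {t0..} t \<partial>lborel"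
  assume "?I \<noteq> \<infinity>"
  then obtain r where r: "?I = ennreal r" "0 \<le> r"
    using less_top_ennreal top.not_eq_extremum by auto
  define b where "b = t0 * exp ((r + 1) / c)"
  have b: "t0 \<le> b"
    unfolding b_def using t0 r(2) c by (simp add: mult_le_cancel_left1 one_le_exp_iff)
  have "(\<integral>\<^sup>+ t. ennreal (c / t) * indicator {t0..b} t \<partial>lborel) = ennreal (c * ln b - c * ln t0)"
  proof (rule nn_integral_FTC_Icc)
    show "((\<lambda>t. c * ln t) has_real_derivative c / x) (at x)" if "x \<in> {t0..b}" for x
      using that t0 by (auto intro!: derivative_eq_intros)
  qed (use b t0 c in auto)
  also have "c * ln b - c * ln t0 = r + 1"
    unfolding b_def using t0 c by (simp add: ln_mult field_simps)
  finally have "ennreal (r + 1) = (\<integral>\<^sup>+ t. ennreal (c / t) * indicator {t0..b} t \<partial>lborel)" ..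
  also have "\<dots> \<le> ?I"
    by (intro nn_integral_mono) (auto simp: indicator_def)
  finally show False using r by (simp add: ennreal_le_iff)
qed

lemma nn_integral_inverse_square_atMost_0:
  fixes c :: real
  assumes c: "0 < c"
  shows "(\<integral>\<^sup>+ y. ennreal (1 / (c - y)\<^sup>2) * indicator {..0} y \<partial>lborel) = ennreal (1 / c)"
proof -
  have "(\<integral>\<^sup>+ y. ennreal (1 / (c - y)\<^sup>2) * indicator {..0} y \<partial>lborel)
      = (\<integral>\<^sup>+ y. ennreal (1 / (c - (0 + -1 * y))\<^sup>2) * indicator {..0} (0 + -1 * y) \<partial>lborel)"
    using nn_integral_real_affine[of "\<lambda>y. ennreal (1 / (c - y)\<^sup>2) * indicator {..0} y" "-1" 0]
    by simp
  also have "\<dots> = (\<integral>\<^sup>+ y. ennreal (1 / (c + y)\<^sup>2) * indicator {0..} y \<partial>lborel)"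
    by (auto intro!: nn_integral_cong simp: indicator_def)
  also have "\<dots> = ennreal (0 - (- 1 / (c + 0)))"
  proof (rule nn_integral_FTC_atLeast)
    show "((\<lambda>y. - 1 / (c + y)) has_real_derivative 1 / (c + x)\<^sup>2) (at x)" if "0 \<le> x" for x
      using that c by (auto intro!: derivative_eq_intros simp: power2_eq_square field_simps)
    show "((\<lambda>y. - 1 / (c + y)) \<longlongrightarrow> 0) at_top" by real_asymp
  qed auto
  finally show ?thesis by simp
qed

lemma integral_mult_square_le:
  fixes u f :: "real \<Rightarrow> real"
  assumes [measurable]: "u \<in> borel_measurable borel" "f \<in> borel_measurable borel"
  shows "ennreal ((LINT y|lborel. u y * f y)\<^sup>2)
     \<le> (\<integral>\<^sup>+ y. ennreal ((u y)\<^sup>2) \<partial>lborel) * (\<integral>\<^sup>+ y. ennreal ((f y)\<^sup>2) \<partial>lborel)"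
proof (cases "integrable lborel (\<lambda>y. u y * f y)")
  case True
  let ?z = "LINT y|lborel. u y * f y"
  have "ennreal \<bar>?z\<bar> \<le> (\<integral>\<^sup>+ y. ennreal (norm (u y * f y)) \<partial>lborel)"
    using integral_norm_bound_ennreal[OF True] by simp
  also have "\<dots> = (\<integral>\<^sup>+ y. ennreal \<bar>u y\<bar> * ennreal \<bar>f y\<bar> \<partial>lborel)"
    by (intro nn_integral_cong) (simp add: abs_mult ennreal_mult)
  finally have "(ennreal \<bar>?z\<bar>)\<^sup>2 \<le> (\<integral>\<^sup>+ y. ennreal \<bar>u y\<bar> * ennreal \<bar>f y\<bar> \<partial>lborel)\<^sup>2"
    by (intro power_mono) auto
  also have "\<dots> \<le> (\<integral>\<^sup>+ y. (ennreal \<bar>u y\<bar>)\<^sup>2 \<partial>lborel) * (\<integral>\<^sup>+ y. (ennreal \<bar>f y\<bar>)\<^sup>2 \<partial>lborel)"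
    by (rule Cauchy_Schwarz_nn_integral) measurable
  finally show ?thesis by (simp add: ennreal_power)
next
  case False
  then show ?thesis by (simp add: not_integrable_integral_eq)
qed

lemma hilbert_eq_integral_if_vanishes_near:
  assumes "\<And>y. \<bar>x - y\<bar> < 1 \<Longrightarrow> g y = 0"
  shows "hilbert g x = (LINT y|lborel. g y / (x - y))"
proof -
  have near: "\<forall>\<^sub>F e in at_right (0::real).
      (LINT y:{y. e < \<bar>x - y\<bar>}|lborel. g y / (x - y)) = (LINT y|lborel. g y / (x - y))"
    using eventually_at_right_real[of 0 1, OF zero_less_one]
  proof (rule eventually_mono)
    fix e :: real assume "e \<in> {0<..<1}"
    then have "(\<lambda>y. indicator {y. e < \<bar>x - y\<bar>} y *\<^sub>R (g y / (x - y))) = (\<lambda>y. g y / (x - y))"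
      using assms by (intro ext) (auto simp: indicator_def)
    then show "(LINT y:{y. e < \<bar>x - y\<bar>}|lborel. g y / (x - y)) = (LINT y|lborel. g y / (x - y))"
      by (simp add: set_lebesgue_integral_def)
  qed
  show ?thesis unfolding hilbert_def
    by (rule tendsto_Lim[OF _ tendsto_eventually[OF near]]) simp
qed

lemma hilbert_zero: "hilbert (\<lambda>y. 0) = (\<lambda>x. 0)"
  using hilbert_eq_integral_if_vanishes_near[of _ "\<lambda>y. 0"] by auto

lemma hilbert_mult_square_le:
  fixes b f :: "real \<Rightarrow> real"
  assumes [measurable]: "b \<in> borel_measurable borel" "f \<in> borel_measurable borel"
    and "\<And>y. \<bar>x - y\<bar> < 1 \<Longrightarrow> b y = 0"
  shows "ennreal ((hilbert (\<lambda>y. b y * f y) x)\<^sup>2)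
     \<le> (\<integral>\<^sup>+ y. ennreal ((b y / (x - y))\<^sup>2) \<partial>lborel) * (\<integral>\<^sup>+ y. ennreal ((f y)\<^sup>2) \<partial>lborel)"
proof -
  have "hilbert (\<lambda>y. b y * f y) x = (LINT y|lborel. b y * f y / (x - y))"
    using assms(3) by (intro hilbert_eq_integral_if_vanishes_near) simp
  also have "\<dots> = (LINT y|lborel. b y / (x - y) * f y)"
    by simp
  finally show ?thesis
    by (simp only:) (rule integral_mult_square_le; measurable)
qed

lemma commutator_commutator_of_disjoint:
  assumes "\<And>x. b1 x * b2 x = 0" and "T (\<lambda>y. 0) = (\<lambda>x. 0)"
  shows "commutator b2 (commutator b1 T) f x
     = - b2 x * T (\<lambda>y. b1 y * f y) x - b1 x * T (\<lambda>y. b2 y * f y) x"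
proof -
  have "(\<lambda>y. b1 y * (b2 y * f y)) = (\<lambda>y. 0)"
    using assms(1) by (metis mult.assoc mult_zero_left)
  then show ?thesis
    unfolding commutator_def using assms(1)[of x] assms(2) by (auto simp: algebra_simps)
qed

lemma L2_bounded_on_Linf_c_if_square_le:
  fixes T :: "(real \<Rightarrow> real) \<Rightarrow> real \<Rightarrow> real" and W :: "real \<Rightarrow> ennreal"
  assumes "\<And>f x. f \<in> borel_measurable borel \<Longrightarrow>
      ennreal ((T f x)\<^sup>2) \<le> W x * (\<integral>\<^sup>+ y. ennreal ((f y)\<^sup>2) \<partial>lborel)"
    and [measurable]: "W \<in> borel_measurable borel"
    and "(\<integral>\<^sup>+ x. W x \<partial>lborel) < \<infinity>"
  shows "L2_bounded_on_Linf_c T"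
proof -
  obtain r where r: "(\<integral>\<^sup>+ x. W x \<partial>lborel) = ennreal r" "0 \<le> r"
    using assms(3) less_top_ennreal by auto
  show ?thesis
    unfolding L2_bounded_on_Linf_c_def
  proof (intro exI[of _ "sqrt r"] conjI allI impI)
    fix f assume "Linf_c f"
    then have [measurable]: "f \<in> borel_measurable borel" unfolding Linf_c_def by simp
    have "(\<integral>\<^sup>+ x. ennreal ((T f x)\<^sup>2) \<partial>lborel)
        \<le> (\<integral>\<^sup>+ x. W x * (\<integral>\<^sup>+ y. ennreal ((f y)\<^sup>2) \<partial>lborel) \<partial>lborel)"
      by (intro nn_integral_mono assms(1)) measurable
    also have "\<dots> = (\<integral>\<^sup>+ x. W x \<partial>lborel) * (\<integral>\<^sup>+ y. ennreal ((f y)\<^sup>2) \<partial>lborel)"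
      by (rule nn_integral_multc) measurable
    finally show "(\<integral>\<^sup>+ x. ennreal ((T f x)\<^sup>2) \<partial>lborel)
        \<le> ennreal ((sqrt r)\<^sup>2) * (\<integral>\<^sup>+ y. ennreal ((f y)\<^sup>2) \<partial>lborel)"
      using r by simp
  qed (use r in simp)
qed

lemma one_le_ln_exp1_add:
  assumes "0 \<le> t"
  shows "1 \<le> ln (exp 1 + (t::real))"
proof -
  have "ln (exp 1) \<le> ln (exp 1 + t)"
    using assms by (subst ln_le_cancel_iff) (auto intro: add_pos_nonneg)
  then show ?thesis by simp
qed

lemma square_ln_mono:
  fixes u v :: real
  assumes "0 \<le> u" "u \<le> v"
  shows "u\<^sup>2 * ln (exp 1 + u) \<le> v\<^sup>2 * ln (exp 1 + v)"
proof (rule mult_mono)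
  show "ln (exp 1 + u) \<le> ln (exp 1 + v)"
    using assms by (subst ln_le_cancel_iff) (auto intro: add_pos_nonneg)
  show "0 \<le> ln (exp 1 + u)"
    using one_le_ln_exp1_add[OF assms(1)] by simp
qed (use assms in \<open>auto intro: power_mono\<close>)

context
  fixes A :: "real \<Rightarrow> real" and p \<delta> :: real
  assumes A: "\<forall>t\<ge>0. A t = t powr p * ln (exp 1 + t) powr (p - 1 + \<delta>)"
    and p: "1 < p" and \<delta>: "0 < \<delta>"
begin

lemma log_bump_ge_powr:
  assumes t: "0 \<le> t"
  shows "t powr p \<le> A t"
proof -
  have "1 \<le> ln (exp 1 + t) powr (p - 1 + \<delta>)"
    using one_le_ln_exp1_add[OF t] p \<delta> by (intro ge_one_powr_ge_zero) auto
  then have "t powr p * 1 \<le> t powr p * ln (exp 1 + t) powr (p - 1 + \<delta>)"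
    by (intro mult_left_mono) auto
  then show ?thesis using A t by simp
qed

lemma bdd_above_log_bump_conj: "bdd_above ((\<lambda>s. s * t - A s) ` {0<..})"
proof -
  define S where "S = max 1 ((\<bar>t\<bar> + 1) powr (1 / (p - 1)))"
  have "s * t - A s \<le> S * \<bar>t\<bar>" if s: "0 < s" for s
  proof -
    have As: "s powr p \<le> A s" using log_bump_ge_powr s by simp
    show ?thesis
    proof (cases "s \<le> S")
      case True
      have "s * t \<le> s * \<bar>t\<bar>" using s by (intro mult_left_mono) auto
      also have "\<dots> \<le> S * \<bar>t\<bar>" using True by (intro mult_right_mono) auto
      finally show ?thesis using As powr_ge_zero[of s p] by linarith
    next
      case False
      then have sS: "(\<bar>t\<bar> + 1) powr (1 / (p - 1)) < s" unfolding S_def by auto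
      have "\<bar>t\<bar> + 1 = ((\<bar>t\<bar> + 1) powr (1 / (p - 1))) powr (p - 1)"
        using p by (simp add: powr_powr)
      also have "\<dots> < s powr (p - 1)"
        using sS p by (intro powr_less_mono2) auto
      finally have "s * t \<le> s * s powr (p - 1)"
        using s by (smt (verit) abs_ge_self mult_left_mono)
      also have "\<dots> = s powr p" using s by (simp add: powr_mult_base)
      finally have "s * t - A s \<le> 0" using As by linarith
      also have "0 \<le> S * \<bar>t\<bar>" unfolding S_def by simp
      finally show ?thesis .
    qed
  qed
  then show ?thesis by (auto intro!: bdd_aboveI2)
qed

lemma log_bump_exponent_ge_two:
  assumes "B2 (young_conj A)"
  shows "2 \<le> p"
proof (rule ccontr)
  assume "\<not> 2 \<le> p"
  then have "((\<lambda>t. t powr p * ln (exp 1 + t) powr (p - 1 + \<delta>) / t\<^sup>2) \<longlongrightarrow> 0) at_top"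
    by real_asymp
  then have "\<forall>\<^sub>F t in at_top. t powr p * ln (exp 1 + t) powr (p - 1 + \<delta>) / t\<^sup>2 < 1/2"
    by (rule order_tendstoD) simp
  then obtain t1 where t1: "\<And>t. t \<ge> t1 \<Longrightarrow> t powr p * ln (exp 1 + t) powr (p - 1 + \<delta>) / t\<^sup>2 < 1/2"
    by (auto simp: eventually_at_top_linorder)
  define t0 where "t0 = max 1 t1"
  have conj_ge: "t\<^sup>2 / 2 \<le> young_conj A t" if t: "t0 \<le> t" for t
  proof -
    have t_pos: "0 < t" using t unfolding t0_def by simp
    then have "A t < t\<^sup>2 / 2"
      using t1[of t] t A unfolding t0_def by (simp add: field_simps)
    moreover have "t * t - A t \<le> young_conj A t"
      unfolding young_conj_def using t_pos by (intro cSUP_upper bdd_above_log_bump_conj) auto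
    ultimately show ?thesis by (simp add: power2_eq_square)
  qed
  have "\<infinity> = (\<integral>\<^sup>+ t. ennreal ((1/2) / t) * indicator {t0..} t \<partial>lborel)"
    by (rule nn_integral_atLeast_inverse_infinite[symmetric]) (auto simp: t0_def)
  also have "\<dots> \<le> (\<integral>\<^sup>+ t\<in>{1..}. ennreal (young_conj A t / t\<^sup>2 / t) \<partial>lborel)"
  proof (intro nn_integral_mono)
    fix t :: real
    show "ennreal ((1/2) / t) * indicator {t0..} t \<le> ennreal (young_conj A t / t\<^sup>2 / t) * indicator {1..} t"
    proof (cases "t0 \<le> t")
      case True
      then have t_pos: "0 < t" unfolding t0_def by simp
      have "(1/2) / t = (t\<^sup>2 / 2) / t\<^sup>2 / t" using t_pos by (simp add: field_simps power2_eq_square)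
      also have "\<dots> \<le> young_conj A t / t\<^sup>2 / t"
        using conj_ge[OF True] t_pos by (intro divide_right_mono) auto
      finally show ?thesis using True by (auto simp: t0_def intro: ennreal_leI)
    qed simp
  qed
  finally show False using assms unfolding B2_def by (simp add: top_unique)
qed

end

lemma log_bump_ge_square_ln:
  assumes "log_bump A" "B2 (young_conj A)" "1 \<le> t"
  shows "t\<^sup>2 * ln (exp 1 + t) \<le> A t"
proof -
  obtain p \<delta> where p: "1 < p" and \<delta>: "0 < \<delta>"
    and A: "\<forall>t\<ge>0. A t = t powr p * ln (exp 1 + t) powr (p - 1 + \<delta>)"
    using assms(1) unfolding log_bump_def by blast
  have p2: "2 \<le> p" using log_bump_exponent_ge_two[OF A p \<delta> assms(2)] .
  have L: "1 \<le> ln (exp 1 + t)" using one_le_ln_exp1_add assms(3) by simp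
  have "t\<^sup>2 = t powr 2" using assms(3) by (simp add: powr_numeral)
  also have "\<dots> \<le> t powr p" using assms(3) p2 by (intro powr_mono) auto
  finally have "t\<^sup>2 * ln (exp 1 + t) powr 1 \<le> t powr p * ln (exp 1 + t) powr (p - 1 + \<delta>)"
    using L p2 \<delta> by (intro mult_mono powr_mono) auto
  then show ?thesis using A L assms(3) by simp
qed

lemma orlicz_avg_ge:
  fixes A g :: "real \<Rightarrow> real"
  assumes A: "\<And>t. m / M \<le> t \<Longrightarrow> Q \<le> A t" and Q: "0 \<le> Q"
    and G: "G \<in> sets lborel" "G \<subseteq> {a..b}" "emeasure lborel G = ennreal \<mu>" "0 \<le> \<mu>"
    and g: "\<forall>x\<in>G. m \<le> \<bar>g x\<bar>" and "0 \<le> m" "0 < M"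
    and "a \<le> b" and large: "b - a < Q * \<mu>"
  shows "ereal M \<le> orlicz_avg A g a b"
  unfolding orlicz_avg_def
proof (rule Inf_greatest, clarify)
  fix l :: real
  assume l: "0 < l" and avg: "(\<integral>\<^sup>+ x\<in>{a..b}. ennreal (A (\<bar>g x\<bar> / l)) \<partial>lborel) \<le> ennreal (b - a)"
  show "ereal M \<le> ereal l"
  proof (rule ccontr)
    assume "\<not> ereal M \<le> ereal l"
    then have "l < M" by simp
    have "Q \<le> A (\<bar>g x\<bar> / l)" if x: "x \<in> G" for x
    proof (rule A)
      have "m / M \<le> m / l" using \<open>0 \<le> m\<close> l \<open>l < M\<close> by (intro divide_left_mono) auto
      also have "\<dots> \<le> \<bar>g x\<bar> / l" using g x l by (intro divide_right_mono) auto
      finally show "m / M \<le> \<bar>g x\<bar> / l" .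
    qed
    then have "(\<integral>\<^sup>+ x. ennreal Q * indicator G x \<partial>lborel)
        \<le> (\<integral>\<^sup>+ x\<in>{a..b}. ennreal (A (\<bar>g x\<bar> / l)) \<partial>lborel)"
      using G(2) by (intro nn_integral_mono) (auto simp: indicator_def intro: ennreal_leI)
    also have "\<dots> \<le> ennreal (b - a)" by (rule avg)
    finally have "ennreal (Q * \<mu>) \<le> ennreal (b - a)"
      using G(1,3) Q G(4) by (simp add: nn_integral_cmult_indicator ennreal_mult)
    then show False using large \<open>a \<le> b\<close> by (simp add: ennreal_le_iff2)
  qed
qed

lemma orlicz_avg_ge_square_ln:
  fixes A g :: "real \<Rightarrow> real"
  assumes "log_bump A" "B2 (young_conj A)"
    and "G \<in> sets lborel" "G \<subseteq> {a..b}" "emeasure lborel G = ennreal \<mu>" "0 \<le> \<mu>"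
    and "\<forall>x\<in>G. m \<le> \<bar>g x\<bar>" and "0 < M" "M \<le> m"
    and "a \<le> b" and "b - a < (m / M)\<^sup>2 * ln (exp 1 + m / M) * \<mu>"
  shows "ereal M \<le> orlicz_avg A g a b"
proof (rule orlicz_avg_ge[where Q = "(m / M)\<^sup>2 * ln (exp 1 + m / M)"])
  show "(m / M)\<^sup>2 * ln (exp 1 + m / M) \<le> A t" if "m / M \<le> t" for t
  proof -
    have "1 \<le> m / M" using assms(8,9) by simp
    then show ?thesis
      using that square_ln_mono[of "m / M" t] log_bump_ge_square_ln[OF assms(1,2), of t] by simp
  qed
  show "0 \<le> (m / M)\<^sup>2 * ln (exp 1 + m / M)"
    using assms(8,9) one_le_ln_exp1_add[of "m / M"] by simp
qed (use assms in auto)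

text \<open>In \<open>spike_height\<close> the factor \<open>n + 1\<close> is the lower bound aimed at for the Orlicz
  averages over \<open>[-a\<^sub>n, a\<^sub>n + 1]\<close>, and \<open>6\<close> compensates the deviations \<open>h\<^sub>n/2\<close> of
  \<open>b\<^sub>1\<close> and \<open>1/3\<close> of \<open>b\<^sub>2\<close>; the exponent in \<open>spike_scale\<close> is what makes
  \<open>spike_start_lt_square_ln\<close> hold.\<close>
definition spike_scale :: "nat \<Rightarrow> real" where
  "spike_scale n = exp (72 * (real n + 1)\<^sup>2 * 2 ^ n + 1)"

definition spike_height :: "nat \<Rightarrow> real" where
  "spike_height n = 6 * (real n + 1) * spike_scale n"

definition spike_start :: "nat \<Rightarrow> real" where
  "spike_start n = (spike_height n)\<^sup>2 * 2 ^ n"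

definition spike :: "nat \<Rightarrow> real set" where
  "spike n = {spike_start n ..< spike_start n + 1}"

definition spikes :: "real \<Rightarrow> real" where
  "spikes x = (\<Sum>n. spike_height n * indicator (spike n) x)"

lemma one_less_spike_scale: "1 < spike_scale n"
  unfolding spike_scale_def by (simp add: add_nonneg_pos)

lemma spike_height_ge: "6 \<le> spike_height n"
proof -
  have "6 * 1 * 1 \<le> 6 * (real n + 1) * spike_scale n"
    using one_less_spike_scale[of n] by (intro mult_mono) auto
  then show ?thesis unfolding spike_height_def by simp
qed

lemma spike_start_ge: "36 \<le> spike_start n"
proof -
  have "6\<^sup>2 * 1 \<le> (spike_height n)\<^sup>2 * 2 ^ n"
    using spike_height_ge by (intro mult_mono power_mono) auto
  then show ?thesis unfolding spike_start_def by simp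
qed

lemma spike_height_square_div_start: "(spike_height n)\<^sup>2 / spike_start n = (1/2) ^ n"
  using spike_height_ge[of n] unfolding spike_start_def by (simp add: field_simps power_divide)

lemma spike_start_Suc: "2 * spike_start n \<le> spike_start (Suc n)"
proof -
  have "(real n + 1)\<^sup>2 * 2 ^ n \<le> (real (Suc n) + 1)\<^sup>2 * 2 ^ Suc n"
    by (intro mult_mono power_mono) auto
  then have "spike_scale n \<le> spike_scale (Suc n)"
    unfolding spike_scale_def by simp
  then have "spike_height n \<le> spike_height (Suc n)"
    unfolding spike_height_def using one_less_spike_scale[of n] by (intro mult_mono) auto
  then have "(spike_height n)\<^sup>2 \<le> (spike_height (Suc n))\<^sup>2"
    using spike_height_ge[of n] by (intro power_mono) auto
  then show ?thesis unfolding spike_start_def by simp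
qed

lemma spike_start_less: "n < m \<Longrightarrow> spike_start n + 1 \<le> spike_start m"
proof (induction m)
  case (Suc m)
  have "spike_start n \<le> spike_start m"
    using Suc by (cases "n = m") (auto simp: less_Suc_eq)
  then show ?case using spike_start_Suc[of m] spike_start_ge[of m] by linarith
qed simp

lemma spike_disjoint:
  assumes "x \<in> spike n" "x \<in> spike m"
  shows "n = m"
proof (rule ccontr)
  assume "n \<noteq> m"
  then have "spike_start n + 1 \<le> spike_start m \<or> spike_start m + 1 \<le> spike_start n"
    using spike_start_less[of n m] spike_start_less[of m n] by linarith
  then show False using assms unfolding spike_def by auto
qed

lemma spikes_eq_height:
  assumes x: "x \<in> spike n"
  shows "spikes x = spike_height n"
proof -
  have "(\<lambda>m. spike_height m * indicator (spike m) x) = (\<lambda>m. if m = n then spike_height m else 0)"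
  proof
    fix m show "spike_height m * indicator (spike m) x = (if m = n then spike_height m else 0)"
      using x spike_disjoint[OF x, of m] by (cases "x \<in> spike m") auto
  qed
  then show ?thesis
    unfolding spikes_def by (simp add: sums_unique[OF sums_single, symmetric])
qed

lemma spikes_eq_0: "(\<And>n. x \<notin> spike n) \<Longrightarrow> spikes x = 0"
  unfolding spikes_def by simp

lemma spikes_cases:
  obtains "spikes x = 0" | n where "x \<in> spike n" "spikes x = spike_height n"
  using spikes_eq_0 spikes_eq_height by blast

lemma spike_start_le: "x \<in> spike n \<Longrightarrow> spike_start n \<le> x"
  unfolding spike_def by simp

lemma spikes_eq_0_below: "x < 36 \<Longrightarrow> spikes x = 0"
  using spike_start_le spike_start_ge by (meson le_less_trans not_less spikes_eq_0)

lemma spikes_nonneg: "0 \<le> spikes x"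
proof (cases x rule: spikes_cases)
  case (2 n)
  then show ?thesis using spike_height_ge[of n] by simp
qed simp

lemma spikes_le: "spikes x \<le> \<bar>x\<bar>"
proof (cases x rule: spikes_cases)
  case (2 n)
  have "spike_height n \<le> (spike_height n)\<^sup>2 * 1"
    using spike_height_ge[of n] by (simp add: power2_eq_square)
  also have "\<dots> \<le> spike_start n" unfolding spike_start_def by (intro mult_left_mono) auto
  finally show ?thesis using 2 spike_start_le[of x n] by simp
qed simp

lemma spike_measurable[measurable]: "spike n \<in> sets borel"
  unfolding spike_def by simp

lemma spikes_measurable[measurable]: "spikes \<in> borel_measurable borel"
  unfolding spikes_def[abs_def] by measurable

lemma spikes_mult_indicator_atMost_0: "spikes x * indicator {..0} x = 0"
  using spikes_eq_0_below[of x] by (cases "x \<le> 0") auto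

lemma Linf_loc_spikes: "Linf_loc spikes"
  unfolding Linf_loc_def
proof (intro conjI allI impI)
  fix K :: "real set" assume "compact K"
  then obtain R where "\<forall>x\<in>K. \<bar>x\<bar> \<le> R"
    using compact_imp_bounded[of K] unfolding bounded_iff by auto
  then have "\<forall>x\<in>K. \<bar>spikes x\<bar> \<le> R"
    using spikes_le spikes_nonneg by (metis abs_of_nonneg order_trans)
  then show "\<exists>M. AE x in lborel. x \<in> K \<longrightarrow> \<bar>spikes x\<bar> \<le> M"
    by (intro exI[of _ R] AE_I2) simp
qed simp

lemma Linf_loc_indicator_atMost_0: "Linf_loc (indicator {..0})"
  unfolding Linf_loc_def by (auto intro!: exI[of _ 1] AE_I2 simp: indicator_def)

lemma double_commutator_spikes:
  "commutator (indicator {..0}) (commutator spikes hilbert) f x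
     = - indicator {..0} x * hilbert (\<lambda>y. spikes y * f y) x
       - spikes x * hilbert (\<lambda>y. indicator {..0} y * f y) x"
  by (rule commutator_commutator_of_disjoint) (simp_all add: spikes_mult_indicator_atMost_0 hilbert_zero)

lemma nn_integral_spikes_kernel_le:
  assumes x: "x \<le> 0"
  shows "(\<integral>\<^sup>+ y. ennreal ((spikes y / (x - y))\<^sup>2) \<partial>lborel)
     \<le> (\<Sum>n. ennreal ((spike_height n)\<^sup>2 / (spike_start n - x)\<^sup>2))"
proof -
  have "(\<integral>\<^sup>+ y. ennreal ((spikes y / (x - y))\<^sup>2) \<partial>lborel)
      \<le> (\<integral>\<^sup>+ y. (\<Sum>n. ennreal ((spike_height n)\<^sup>2 / (spike_start n - x)\<^sup>2) * indicator (spike n) y) \<partial>lborel)"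
  proof (intro nn_integral_mono)
    fix y
    show "ennreal ((spikes y / (x - y))\<^sup>2)
        \<le> (\<Sum>n. ennreal ((spike_height n)\<^sup>2 / (spike_start n - x)\<^sup>2) * indicator (spike n) y)"
    proof (cases y rule: spikes_cases)
      case (2 n)
      have "0 < spike_start n - x" using spike_start_ge[of n] x by linarith
      then have "(spikes y / (x - y))\<^sup>2 \<le> (spike_height n)\<^sup>2 / (spike_start n - x)\<^sup>2"
        using 2 spike_start_le[of y n]
        by (auto simp: power_divide power2_commute[of x] intro!: divide_left_mono power_mono)
      then have "ennreal ((spikes y / (x - y))\<^sup>2)
          \<le> ennreal ((spike_height n)\<^sup>2 / (spike_start n - x)\<^sup>2) * indicator (spike n) y"
        using 2 by (simp add: ennreal_leI)
      also have "\<dots> \<le> (\<Sum>n. ennreal ((spike_height n)\<^sup>2 / (spike_start n - x)\<^sup>2) * indicator (spike n) y)"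
        using sum_le_suminf[OF summableI, of "{n}"] by simp
      finally show ?thesis .
    qed simp
  qed
  also have "\<dots> = (\<Sum>n. \<integral>\<^sup>+ y. ennreal ((spike_height n)\<^sup>2 / (spike_start n - x)\<^sup>2) * indicator (spike n) y \<partial>lborel)"
    by (rule nn_integral_suminf) measurable
  also have "\<dots> = (\<Sum>n. ennreal ((spike_height n)\<^sup>2 / (spike_start n - x)\<^sup>2))"
    by (simp add: nn_integral_cmult_indicator spike_def)
  finally show ?thesis .
qed

text \<open>A pointwise bound for the squared \<open>L\<^sup>2\<close> norm of the kernel of the double commutator:
  the first sum is the contribution of the spikes seen from \<open>x \<le> 0\<close>, the second the one of
  \<open>(-\<infinity>, 0]\<close> seen from the \<open>n\<close>-th spike, at most \<open>h\<^sub>n\<^sup>2 / a\<^sub>n = 2\<^sup>-\<^sup>n\<close>.\<close>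
definition spikes_kernel_weight :: "real \<Rightarrow> ennreal" where
  "spikes_kernel_weight x =
     indicator {..0} x * (\<Sum>n. ennreal ((spike_height n)\<^sup>2 / (spike_start n - x)\<^sup>2))
     + (\<Sum>n. ennreal ((1/2) ^ n) * indicator (spike n) x)"

lemma spikes_kernel_weight_measurable[measurable]: "spikes_kernel_weight \<in> borel_measurable borel"
  unfolding spikes_kernel_weight_def[abs_def] by measurable

lemma double_commutator_spikes_square_le_nonpos:
  assumes [measurable]: "f \<in> borel_measurable borel" and x: "x \<le> 0"
  shows "ennreal ((commutator (indicator {..0}) (commutator spikes hilbert) f x)\<^sup>2)
     \<le> spikes_kernel_weight x * (\<integral>\<^sup>+ y. ennreal ((f y)\<^sup>2) \<partial>lborel)"
proof -
  have "ennreal ((commutator (indicator {..0}) (commutator spikes hilbert) f x)\<^sup>2)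
      = ennreal ((hilbert (\<lambda>y. spikes y * f y) x)\<^sup>2)"
    using x spikes_eq_0_below[of x] by (simp add: double_commutator_spikes)
  also have "\<dots> \<le> (\<integral>\<^sup>+ y. ennreal ((spikes y / (x - y))\<^sup>2) \<partial>lborel) * (\<integral>\<^sup>+ y. ennreal ((f y)\<^sup>2) \<partial>lborel)"
    using x spikes_eq_0_below by (intro hilbert_mult_square_le) auto
  also have "\<dots> \<le> spikes_kernel_weight x * (\<integral>\<^sup>+ y. ennreal ((f y)\<^sup>2) \<partial>lborel)"
    using nn_integral_spikes_kernel_le[OF x] x
    by (intro mult_right_mono) (auto simp: spikes_kernel_weight_def intro: add_increasing2)
  finally show ?thesis .
qed

lemma double_commutator_spikes_square_le_pos:
  assumes [measurable]: "f \<in> borel_measurable borel" and x: "0 < x"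
  shows "ennreal ((commutator (indicator {..0}) (commutator spikes hilbert) f x)\<^sup>2)
     \<le> spikes_kernel_weight x * (\<integral>\<^sup>+ y. ennreal ((f y)\<^sup>2) \<partial>lborel)"
proof (cases x rule: spikes_cases)
  case 1
  then show ?thesis using x by (simp add: double_commutator_spikes)
next
  case (2 n)
  have start: "spike_start n \<le> x" using spike_start_le[OF 2(1)] .
  then have "36 \<le> x" using spike_start_ge[of n] by linarith
  have "(\<integral>\<^sup>+ y. ennreal ((indicator {..0} y / (x - y))\<^sup>2) \<partial>lborel)
      = (\<integral>\<^sup>+ y. ennreal (1 / (x - y)\<^sup>2) * indicator {..0} y \<partial>lborel)"
    by (intro nn_integral_cong) (auto simp: indicator_def power_divide)
  also have "\<dots> = ennreal (1 / x)"
    using x by (rule nn_integral_inverse_square_atMost_0)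
  finally have kernel: "(\<integral>\<^sup>+ y. ennreal ((indicator {..0} y / (x - y))\<^sup>2) \<partial>lborel) = ennreal (1 / x)" .
  have "ennreal ((commutator (indicator {..0}) (commutator spikes hilbert) f x)\<^sup>2)
      = ennreal ((spike_height n)\<^sup>2) * ennreal ((hilbert (\<lambda>y. indicator {..0} y * f y) x)\<^sup>2)"
    using x 2 by (simp add: double_commutator_spikes ennreal_mult[symmetric] power_mult_distrib)
  also have "\<dots> \<le> ennreal ((spike_height n)\<^sup>2) * (ennreal (1 / x) * (\<integral>\<^sup>+ y. ennreal ((f y)\<^sup>2) \<partial>lborel))"
    using hilbert_mult_square_le[of "indicator {..0}" f x] \<open>36 \<le> x\<close>
    by (intro mult_left_mono) (auto simp: kernel)
  also have "\<dots> = ennreal ((spike_height n)\<^sup>2 / x) * (\<integral>\<^sup>+ y. ennreal ((f y)\<^sup>2) \<partial>lborel)"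
    by (simp add: ennreal_mult'[symmetric] mult.assoc[symmetric])
  also have "\<dots> \<le> ennreal ((1/2) ^ n) * (\<integral>\<^sup>+ y. ennreal ((f y)\<^sup>2) \<partial>lborel)"
  proof (intro mult_right_mono ennreal_leI)
    have "(spike_height n)\<^sup>2 / x \<le> (spike_height n)\<^sup>2 / spike_start n"
      using start spike_start_ge[of n] by (intro divide_left_mono) auto
    then show "(spike_height n)\<^sup>2 / x \<le> (1/2) ^ n"
      by (simp add: spike_height_square_div_start)
  qed simp
  also have "\<dots> \<le> spikes_kernel_weight x * (\<integral>\<^sup>+ y. ennreal ((f y)\<^sup>2) \<partial>lborel)"
  proof (intro mult_right_mono)
    have "ennreal ((1/2) ^ n) \<le> (\<Sum>n. ennreal ((1/2) ^ n) * indicator (spike n) x)"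
      using sum_le_suminf[OF summableI, of "{n}" "\<lambda>m. ennreal ((1/2) ^ m) * indicator (spike m) x"] 2(1)
      by simp
    then show "ennreal ((1/2) ^ n) \<le> spikes_kernel_weight x"
      unfolding spikes_kernel_weight_def by (simp add: add_increasing)
  qed simp
  finally show ?thesis .
qed

lemma suminf_ennreal_half_power: "(\<Sum>n. ennreal ((1/2) ^ n)) = 2"
proof -
  have "(\<Sum>n. ennreal ((1/2) ^ n)) = ennreal (\<Sum>n. (1/2::real) ^ n)"
    by (rule suminf_ennreal2) (auto intro: summable_geometric)
  then show ?thesis using suminf_geometric[of "1/2::real"] by simp
qed

lemma nn_integral_spike_seen_from_atMost_0:
  "(\<integral>\<^sup>+ x. ennreal ((spike_height n)\<^sup>2 / (spike_start n - x)\<^sup>2) * indicator {..0} x \<partial>lborel)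
     = ennreal ((1/2) ^ n)"
proof -
  have "(\<integral>\<^sup>+ x. ennreal ((spike_height n)\<^sup>2 / (spike_start n - x)\<^sup>2) * indicator {..0} x \<partial>lborel)
      = (\<integral>\<^sup>+ x. ennreal ((spike_height n)\<^sup>2) * (ennreal (1 / (spike_start n - x)\<^sup>2) * indicator {..0} x) \<partial>lborel)"
    by (intro nn_integral_cong) (simp add: ennreal_mult'[symmetric] mult.assoc[symmetric])
  also have "\<dots> = ennreal ((spike_height n)\<^sup>2) * ennreal (1 / spike_start n)"
    using spike_start_ge[of n]
    by (subst nn_integral_cmult) (auto simp: nn_integral_inverse_square_atMost_0)
  also have "\<dots> = ennreal ((1/2) ^ n)"
    using spike_start_ge[of n] spike_height_square_div_start[of n] by (simp add: ennreal_mult[symmetric])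
  finally show ?thesis .
qed

lemma nn_integral_spikes_kernel_weight: "(\<integral>\<^sup>+ x. spikes_kernel_weight x \<partial>lborel) = 4"
proof -
  have "(\<integral>\<^sup>+ x. indicator {..0} x * (\<Sum>n. ennreal ((spike_height n)\<^sup>2 / (spike_start n - x)\<^sup>2)) \<partial>lborel)
      = (\<integral>\<^sup>+ x. (\<Sum>n. ennreal ((spike_height n)\<^sup>2 / (spike_start n - x)\<^sup>2) * indicator {..0} x) \<partial>lborel)"
    by (simp add: mult.commute)
  also have "\<dots> = (\<Sum>n. \<integral>\<^sup>+ x. ennreal ((spike_height n)\<^sup>2 / (spike_start n - x)\<^sup>2) * indicator {..0} x \<partial>lborel)"
    by (rule nn_integral_suminf) measurable
  finally have far: "(\<integral>\<^sup>+ x. indicator {..0} x * (\<Sum>n. ennreal ((spike_height n)\<^sup>2 / (spike_start n - x)\<^sup>2)) \<partial>lborel) = 2"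
    by (simp add: nn_integral_spike_seen_from_atMost_0 suminf_ennreal_half_power)
  have "(\<integral>\<^sup>+ x. (\<Sum>n. ennreal ((1/2) ^ n) * indicator (spike n) x) \<partial>lborel)
      = (\<Sum>n. \<integral>\<^sup>+ x. ennreal ((1/2) ^ n) * indicator (spike n) x \<partial>lborel)"
    by (rule nn_integral_suminf) measurable
  then have near: "(\<integral>\<^sup>+ x. (\<Sum>n. ennreal ((1/2) ^ n) * indicator (spike n) x) \<partial>lborel) = 2"
    by (simp add: nn_integral_cmult_indicator spike_def suminf_ennreal_half_power)
  have "(\<integral>\<^sup>+ x. spikes_kernel_weight x \<partial>lborel)
      = (\<integral>\<^sup>+ x. indicator {..0} x * (\<Sum>n. ennreal ((spike_height n)\<^sup>2 / (spike_start n - x)\<^sup>2)) \<partial>lborel)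
        + (\<integral>\<^sup>+ x. (\<Sum>n. ennreal ((1/2) ^ n) * indicator (spike n) x) \<partial>lborel)"
    unfolding spikes_kernel_weight_def by (rule nn_integral_add) measurable
  then show ?thesis using far near by simp
qed

lemma L2_bounded_double_commutator_spikes:
  "L2_bounded_on_Linf_c (commutator (indicator {..0}) (commutator spikes hilbert))"
proof (rule L2_bounded_on_Linf_c_if_square_le)
  fix f :: "real \<Rightarrow> real" and x :: real
  assume "f \<in> borel_measurable borel"
  then show "ennreal ((commutator (indicator {..0}) (commutator spikes hilbert) f x)\<^sup>2)
      \<le> spikes_kernel_weight x * (\<integral>\<^sup>+ y. ennreal ((f y)\<^sup>2) \<partial>lborel)"
    by (cases "x \<le> 0")
      (auto intro: double_commutator_spikes_square_le_nonpos double_commutator_spikes_square_le_pos)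
qed (simp_all add: nn_integral_spikes_kernel_weight)

lemma avg_indicator_atMost_0:
  assumes "0 \<le> r"
  shows "avg (indicator {..0}) (-r) (r + 1) = r / (2 * r + 1)"
proof -
  have "(LINT x:{-r..r + 1}|lborel. indicator {..0} x) = (LINT x|lborel. indicator {-r..0} x)"
    unfolding set_lebesgue_integral_def
    by (intro Bochner_Integration.integral_cong) (auto simp: indicator_def)
  also have "\<dots> = r" using assms by simp
  finally show ?thesis unfolding avg_def by simp
qed

lemma indicator_atMost_0_deviation:
  assumes "1 \<le> r"
  shows "1/3 \<le> \<bar>indicator {..0} x - avg (indicator {..0}) (-r) (r + 1)\<bar>"
proof -
  define q where "q = r / (2 * r + 1)"
  have "1/3 \<le> q" "q \<le> 1/2"
    using assms by (simp_all add: q_def field_simps)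
  moreover have "avg (indicator {..0}) (-r) (r + 1) = q"
    using assms by (simp add: q_def avg_indicator_atMost_0)
  ultimately show ?thesis
    by (cases "x \<le> 0") (simp_all add: abs_if)
qed

lemma spikes_deviation:
  obtains G where "G \<in> sets lborel" "G \<subseteq> {- spike_start n..spike_start n + 1}"
    "emeasure lborel G = ennreal 1" "\<forall>x\<in>G. spike_height n / 2 \<le> \<bar>spikes x - c\<bar>"
proof (cases "c \<le> spike_height n / 2")
  case True
  have "\<forall>x\<in>spike n. spike_height n / 2 \<le> \<bar>spikes x - c\<bar>"
    using True by (simp add: spikes_eq_height abs_if)
  moreover have "spike n \<subseteq> {- spike_start n..spike_start n + 1}"
    using spike_start_ge[of n] by (auto simp: spike_def)
  ultimately show ?thesis by (intro that[of "spike n"]) (auto simp: spike_def)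
next
  case False
  have "\<forall>x\<in>{- spike_start n..- spike_start n + 1}. spike_height n / 2 \<le> \<bar>spikes x - c\<bar>"
    using False spike_start_ge[of n] by (auto simp: spikes_eq_0_below)
  moreover have "{- spike_start n..- spike_start n + 1} \<subseteq> {- spike_start n..spike_start n + 1}"
    using spike_start_ge[of n] by auto
  ultimately show ?thesis by (intro that) auto
qed

lemma spike_start_lt_square_ln:
  "2 * spike_start n + 1 < (spike_scale n)\<^sup>2 * ln (exp 1 + spike_scale n)"
proof -
  have E: "1 < spike_scale n" by (rule one_less_spike_scale)
  have "72 * (real n + 1)\<^sup>2 * 2 ^ n + 1 = ln (spike_scale n)"
    unfolding spike_scale_def by simp
  also have "\<dots> \<le> ln (exp 1 + spike_scale n)"
    using E by (subst ln_le_cancel_iff) (auto intro: add_pos_pos)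
  finally have L: "72 * (real n + 1)\<^sup>2 * 2 ^ n + 1 \<le> ln (exp 1 + spike_scale n)" .
  have "2 * spike_start n + 1 = (spike_scale n)\<^sup>2 * (72 * (real n + 1)\<^sup>2 * 2 ^ n) + 1"
    unfolding spike_start_def spike_height_def by (simp add: power2_eq_square algebra_simps)
  also have "\<dots> < (spike_scale n)\<^sup>2 * (72 * (real n + 1)\<^sup>2 * 2 ^ n + 1)"
    using E by (simp add: distrib_left one_less_power)
  also have "\<dots> \<le> (spike_scale n)\<^sup>2 * ln (exp 1 + spike_scale n)"
    using L by (intro mult_left_mono) auto
  finally show ?thesis .
qed

lemma T_C_spikes_ge:
  assumes "log_bump C" "B2 (young_conj C)"
  shows "ereal (real n + 1) \<le> T_C C spikes (indicator {..0})"
proof -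
  let ?a = "- spike_start n" and ?b = "spike_start n + 1"
  let ?g = "\<lambda>x. \<bar>spikes x - avg spikes ?a ?b\<bar> * \<bar>indicator {..0} x - avg (indicator {..0}) ?a ?b\<bar>"
  have start: "1 \<le> spike_start n" using spike_start_ge[of n] by simp
  obtain G where G: "G \<in> sets lborel" "G \<subseteq> {?a..?b}" "emeasure lborel G = ennreal 1"
    and dev: "\<forall>x\<in>G. spike_height n / 2 \<le> \<bar>spikes x - avg spikes ?a ?b\<bar>"
    by (rule spikes_deviation)
  have "ereal (real n + 1) \<le> orlicz_avg C ?g ?a ?b"
  proof (rule orlicz_avg_ge_square_ln[OF assms G, where m = "(real n + 1) * spike_scale n"])
    show "\<forall>x\<in>G. (real n + 1) * spike_scale n \<le> \<bar>?g x\<bar>"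
    proof
      fix x assume "x \<in> G"
      have "(real n + 1) * spike_scale n = spike_height n / 2 * (1/3)"
        by (simp add: spike_height_def)
      also have "\<dots> \<le> ?g x"
        using \<open>x \<in> G\<close> dev indicator_atMost_0_deviation[OF start, of x] spike_height_ge[of n]
        by (intro mult_mono) auto
      finally show "(real n + 1) * spike_scale n \<le> \<bar>?g x\<bar>"
        by simp
    qed
    show "real n + 1 \<le> (real n + 1) * spike_scale n"
      using one_less_spike_scale[of n] by simp
    show "?b - ?a < ((real n + 1) * spike_scale n / (real n + 1))\<^sup>2
        * ln (exp 1 + (real n + 1) * spike_scale n / (real n + 1)) * 1"
      using spike_start_lt_square_ln[of n] by simp
  qed (use start in auto)
  also have "\<dots> \<le> T_C C spikes (indicator {..0})"
    unfolding T_C_def using start by (intro SUP_upper2[of "(?a, ?b)"]) auto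
  finally show ?thesis .
qed

lemma S_AB_spikes_ge:
  assumes "log_bump A" "B2 (young_conj A)" "log_bump B" "B2 (young_conj B)"
  shows "ereal ((real n + 1) / 6) \<le> S_AB A B spikes (indicator {..0})"
proof -
  let ?a = "- spike_start n" and ?b = "spike_start n + 1"
  have start: "1 \<le> spike_start n" using spike_start_ge[of n] by simp
  obtain G where G: "G \<in> sets lborel" "G \<subseteq> {?a..?b}" "emeasure lborel G = ennreal 1"
    and dev: "\<forall>x\<in>G. spike_height n / 2 \<le> \<bar>spikes x - avg spikes ?a ?b\<bar>"
    by (rule spikes_deviation)
  have E: "1 < spike_scale n" by (rule one_less_spike_scale)
  have A: "ereal (real n + 1) \<le> orlicz_avg A (\<lambda>x. spikes x - avg spikes ?a ?b) ?a ?b"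
  proof (rule orlicz_avg_ge_square_ln[OF assms(1,2) G, where m = "3 * (real n + 1) * spike_scale n"])
    have half_height: "3 * (real n + 1) * spike_scale n = spike_height n / 2"
      by (simp add: spike_height_def)
    show "\<forall>x\<in>G. 3 * (real n + 1) * spike_scale n \<le> \<bar>spikes x - avg spikes ?a ?b\<bar>"
      unfolding half_height by (rule dev)
    have "(real n + 1) * 1 \<le> (real n + 1) * (3 * spike_scale n)"
      using E by (intro mult_left_mono) auto
    then show "real n + 1 \<le> 3 * (real n + 1) * spike_scale n"
      by (metis mult.assoc mult.commute mult_1_right)
    have "(spike_scale n)\<^sup>2 * ln (exp 1 + spike_scale n) \<le> (3 * spike_scale n)\<^sup>2 * ln (exp 1 + 3 * spike_scale n)"
      using E by (intro square_ln_mono) auto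
    moreover have "3 * (real n + 1) * spike_scale n / (real n + 1) = 3 * spike_scale n"
      by (simp add: field_simps)
    ultimately show "?b - ?a < (3 * (real n + 1) * spike_scale n / (real n + 1))\<^sup>2
        * ln (exp 1 + 3 * (real n + 1) * spike_scale n / (real n + 1)) * 1"
      using spike_start_lt_square_ln[of n] by (simp only:)
  qed (use start in auto)
  have B: "ereal (1/6) \<le> orlicz_avg B (\<lambda>x. indicator {..0} x - avg (indicator {..0}) ?a ?b) ?a ?b"
  proof (rule orlicz_avg_ge_square_ln[OF assms(3,4), where G = "{?a..?b}" and \<mu> = "?b - ?a" and m = "1/3"])
    show "\<forall>x\<in>{?a..?b}. 1/3 \<le> \<bar>indicator {..0} x - avg (indicator {..0}) ?a ?b\<bar>"
      using indicator_atMost_0_deviation[OF start] by blast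
    have "1 \<le> ln (exp 1 + (2::real))" by (rule one_le_ln_exp1_add) simp
    then show "?b - ?a < ((1/3) / (1/6))\<^sup>2 * ln (exp 1 + (1/3) / (1/6)) * (?b - ?a)"
      using start by simp
  qed (use start in auto)
  have "ereal ((real n + 1) / 6) = ereal (real n + 1) * ereal (1/6)" by simp
  also have "\<dots> \<le> orlicz_avg A (\<lambda>x. spikes x - avg spikes ?a ?b) ?a ?b
      * orlicz_avg B (\<lambda>x. indicator {..0} x - avg (indicator {..0}) ?a ?b) ?a ?b"
    using A B by (intro ereal_mult_mono) (auto intro: order_trans[OF _ A])
  also have "\<dots> \<le> S_AB A B spikes (indicator {..0})"
    unfolding S_AB_def using start by (intro SUP_upper2[of "(?a, ?b)"]) auto
  finally show ?thesis .
qed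

lemma T_C_spikes:
  assumes "log_bump C" "B2 (young_conj C)"
  shows "T_C C spikes (indicator {..0}) = \<infinity>"
proof (rule ereal_top)
  fix r :: real
  obtain n where "r \<le> real n" using real_arch_simple by blast
  then have "ereal r \<le> ereal (real n + 1)" by simp
  also have "\<dots> \<le> T_C C spikes (indicator {..0})" using assms by (rule T_C_spikes_ge)
  finally show "ereal r \<le> T_C C spikes (indicator {..0})" .
qed

lemma S_AB_spikes:
  assumes "log_bump A" "B2 (young_conj A)" "log_bump B" "B2 (young_conj B)"
  shows "S_AB A B spikes (indicator {..0}) = \<infinity>"
proof (rule ereal_top)
  fix r :: real
  obtain n where "6 * r \<le> real n" using real_arch_simple by blast
  then have "ereal r \<le> ereal ((real n + 1) / 6)" by simp
  also have "\<dots> \<le> S_AB A B spikes (indicator {..0})" using assms by (rule S_AB_spikes_ge)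
  finally show "ereal r \<le> S_AB A B spikes (indicator {..0})" .
qed

theorem theorem4p7:
  shows "\<exists>b1 b2. Linf_loc b1 \<and> Linf_loc b2 \<and>
    L2_bounded_on_Linf_c (commutator b2 (commutator b1 hilbert)) \<and>
    (\<forall>A B. log_bump A \<and> log_bump B \<and> B2 (young_conj A) \<and> B2 (young_conj B)
       \<longrightarrow> S_AB A B b1 b2 = \<infinity>) \<and>
    (\<forall>C. log_bump C \<and> B2 (young_conj C) \<longrightarrow> T_C C b1 b2 = \<infinity>)"
  using Linf_loc_spikes Linf_loc_indicator_atMost_0 L2_bounded_double_commutator_spikes
    S_AB_spikes T_C_spikes
  by blast

end
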